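(* Let $W\in\mathbb{D}_n$ satisfy the Ground Assumption, and let $\sigma\subset\mathcal{E}$, $\tau\subset\mathcal{I}$. If $\sigma\sqcup\tau\in FP(W)$, then $\sigma\sqcup\tau'\in FP(W)$ for every $\tau'$ with $\tau\subset\tau'\subset\mathcal{I}$.
   Context: Threshold-linear network: $\dot x_i=-x_i+[\sum_j W_{ij}x_j+b_i]_+$ with $[y]_+=\max(0,y)$; a fixed point is $x^*$ with $x^*=[Wx^*+b]_+$. A Dale matrix $W\in\mathbb{D}_n$ is an $n\times n$ real matrix with a partition $[n]=\mathcal{E}\sqcup\mathcal{I}$ such that $W_{ii}=0$, $W_{ji}\ge0$ for all $j$ if $i\in\mathcal{E}$, $W_{ji}\le0$ for all $j$ if $i\in\mathcal{I}$. Ground Assumption: $(I-W)_\sigma$ nonsingular for every nonempty $\sigma\subset[n]$. $FP(W,b)$ is the set of supports $\{i\in[n]:x^*_i>0\}$ of all fixed points $x^*$ of the network $(W,b)$, and $FP(W)=\bigcup_{b\in\mathbb{R}^n_{\ge0}}FP(W,b)$. *)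

theory Defs
  imports "HOL-Analysis.Analysis"
begin

text \<open>Neurons are indexed by a finite type 'n (so n = CARD('n)); W is an n x n real matrix.\<close>

definition relu :: "real \<Rightarrow> real" where
  "relu y = max 0 y"

definition dale_matrix :: "real^'n^'n \<Rightarrow> 'n set \<Rightarrow> 'n set \<Rightarrow> bool" where
  "dale_matrix W E I \<longleftrightarrow>
     E \<inter> I = {} \<and> E \<union> I = UNIV \<and>
     (\<forall>i. W $ i $ i = 0) \<and>
     (\<forall>i\<in>E. \<forall>j. W $ j $ i \<ge> 0) \<and>
     (\<forall>i\<in>I. \<forall>j. W $ j $ i \<le> 0)"

text \<open>The principal submatrix (I - W)_\<sigma> (rows and columns in \<sigma>) is nonsingular:
  its kernel is trivial, i.e. the only vector supported on \<sigma> whose image under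
  I - W vanishes on \<sigma> is zero.\<close>
definition principal_nonsingular :: "real^'n^'n \<Rightarrow> 'n set \<Rightarrow> bool" where
  "principal_nonsingular A \<sigma> \<longleftrightarrow>
     (\<forall>x::real^'n. (\<forall>i. i \<notin> \<sigma> \<longrightarrow> x $ i = 0) \<and> (\<forall>i\<in>\<sigma>. (A *v x) $ i = 0) \<longrightarrow> x = 0)"

definition ground_assumption :: "real^'n^'n \<Rightarrow> bool" where
  "ground_assumption W \<longleftrightarrow>
     (\<forall>\<sigma>. \<sigma> \<noteq> {} \<longrightarrow> principal_nonsingular (mat 1 - W) \<sigma>)"

definition is_fixed_point :: "real^'n^'n \<Rightarrow> real^'n \<Rightarrow> real^'n \<Rightarrow> bool" where
  "is_fixed_point W b x \<longleftrightarrow> (\<forall>i. x $ i = relu ((W *v x) $ i + b $ i))"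

definition supp :: "real^'n \<Rightarrow> 'n set" where
  "supp x = {i. x $ i > 0}"

definition FPb :: "real^'n^'n \<Rightarrow> real^'n \<Rightarrow> 'n set set" where
  "FPb W b = {supp x | x. is_fixed_point W b x}"

definition FP :: "real^'n^'n \<Rightarrow> 'n set set" where
  "FP W = (\<Union>b\<in>{b::real^'n. \<forall>i. b $ i \<ge> 0}. FPb W b)"

end

theory Submission
  imports Defs
begin

text \<open>A support is realisable precisely when it is the support of a nonnegative vector y
  with W y \<le> y componentwise: take b = y - W y. Adding mass on inhibitory neurons only lowers
  W y, so after putting enough mass on the new inhibitory neurons the inequality persists
  and the support grows by exactly those neurons.\<close>

lemma fixed_point_nonneg:
  assumes "is_fixed_point W b x"
  shows "0 \<le> x"
  using assms by (simp add: is_fixed_point_def relu_def less_eq_vec_def)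

lemma fixed_point_subsolution:
  assumes "is_fixed_point W b x" and "0 \<le> b"
  shows "W *v x \<le> x"
  unfolding less_eq_vec_def
proof
  fix i
  have "x $ i = max 0 ((W *v x) $ i + b $ i)"
    using assms(1) by (simp add: is_fixed_point_def relu_def)
  moreover have "0 \<le> b $ i" using assms(2) by (simp add: less_eq_vec_def)
  ultimately show "(W *v x) $ i \<le> x $ i" by linarith
qed

lemma subsolution_is_fixed_point:
  assumes "0 \<le> y"
  shows "is_fixed_point W (y - W *v y) y"
  using assms by (simp add: is_fixed_point_def relu_def less_eq_vec_def)

lemma FP_iff_subsolution_support:
  "S \<in> FP W \<longleftrightarrow> (\<exists>y. 0 \<le> y \<and> W *v y \<le> y \<and> supp y = S)"
proof
  assume "S \<in> FP W"
  then obtain b x where "0 \<le> b" "is_fixed_point W b x" "supp x = S"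
    by (auto simp: FP_def FPb_def less_eq_vec_def)
  then show "\<exists>y. 0 \<le> y \<and> W *v y \<le> y \<and> supp y = S"
    using fixed_point_nonneg fixed_point_subsolution by blast
next
  assume "\<exists>y. 0 \<le> y \<and> W *v y \<le> y \<and> supp y = S"
  then obtain y where "0 \<le> y" "W *v y \<le> y" "supp y = S" by blast
  moreover have "\<forall>i. 0 \<le> (y - W *v y) $ i"
    using \<open>W *v y \<le> y\<close> by (simp add: less_eq_vec_def)
  ultimately show "S \<in> FP W"
    unfolding FP_def FPb_def using subsolution_is_fixed_point by blast
qed

lemma matrix_vector_mult_nonpos:
  fixes W :: "real^'n^'m"
  assumes "0 \<le> z" and "\<And>i j. z $ j \<noteq> 0 \<Longrightarrow> W $ i $ j \<le> 0"
  shows "W *v z \<le> 0"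
  unfolding less_eq_vec_def
proof
  fix i
  have "W $ i $ j * z $ j \<le> 0" for j
    using assms mult_nonpos_nonneg[of "W $ i $ j" "z $ j"]
    by (cases "z $ j = 0") (auto simp: less_eq_vec_def)
  then show "(W *v z) $ i \<le> 0 $ i"
    by (simp add: matrix_vector_mult_def sum_nonpos)
qed

lemma FP_union_inhibitory:
  fixes W :: "real^'n^'n"
  assumes "S \<in> FP W" and inhibitory: "\<And>i j. j \<in> D \<Longrightarrow> W $ i $ j \<le> 0"
  shows "S \<union> D \<in> FP W"
proof -
  obtain x where x: "0 \<le> x" "W *v x \<le> x" "supp x = S"
    using assms(1) FP_iff_subsolution_support by blast
  define z :: "real^'n" where "z = (\<chi> j. if j \<in> D then 1 + \<bar>(W *v x) $ j\<bar> else 0)"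
  have z_nonneg: "0 \<le> z" by (simp add: z_def less_eq_vec_def)
  have "W *v z \<le> 0"
    using z_nonneg inhibitory by (intro matrix_vector_mult_nonpos) (auto simp: z_def split: if_splits)
  then have W_decrease: "W *v (x + z) \<le> W *v x"
    by (simp add: matrix_vector_right_distrib)
  have "W *v (x + z) \<le> x + z"
    unfolding less_eq_vec_def
  proof
    fix i
    have "(W *v (x + z)) $ i \<le> (W *v x) $ i" "(W *v x) $ i \<le> x $ i" "0 \<le> x $ i"
      using W_decrease x(1,2) by (auto simp: less_eq_vec_def)
    then show "(W *v (x + z)) $ i \<le> (x + z) $ i"
      by (cases "i \<in> D") (auto simp: z_def)
  qed
  moreover have "supp (x + z) = S \<union> D"
    using x(1,3) by (auto simp: supp_def z_def less_eq_vec_def add_pos_nonneg add_nonneg_pos)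
  moreover have "0 \<le> x + z" using x(1) z_nonneg by simp
  ultimately show ?thesis using FP_iff_subsolution_support by blast
qed

theorem mainTheorem12:
  fixes W :: "real^'n^'n" and E I \<sigma> \<tau> \<tau>' :: "'n set"
  assumes "dale_matrix W E I"
    and "ground_assumption W"
    and "\<sigma> \<subseteq> E" and "\<tau> \<subseteq> I"
    and "\<sigma> \<union> \<tau> \<in> FP W"
    and "\<tau> \<subseteq> \<tau>'" and "\<tau>' \<subseteq> I"
  shows "\<sigma> \<union> \<tau>' \<in> FP W"
proof -
  have "\<And>i j. j \<in> \<tau>' \<Longrightarrow> W $ i $ j \<le> 0"
    using assms(1,7) by (auto simp: dale_matrix_def)
  then have "(\<sigma> \<union> \<tau>) \<union> \<tau>' \<in> FP W"
    using assms(5) FP_union_inhibitory by blast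
  moreover have "(\<sigma> \<union> \<tau>) \<union> \<tau>' = \<sigma> \<union> \<tau>'" using assms(6) by blast
  ultimately show ?thesis by simp
qed

end
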